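(* Let $\Delta$ be a simplicial complex on $X=\{x_1,\ldots,x_n\}$ and $k\in\mathbb{N}$ a positive integer. Then $\Delta$ is shellable if and only if its expansion $\Delta^{\mathbf{k}}$ is $k$-shellable.
   Context: For faces $F_1,\dots,F_r$, $\langle F_1,\ldots,F_r\rangle$ denotes the simplicial complex with facets $F_1,\dots,F_r$. $\Delta$ is shellable if its facets can be ordered $F_1,\ldots,F_r$ so that for all $j\ge2$, $\langle F_j\rangle\cap\langle F_1,\ldots,F_{j-1}\rangle$ is pure of dimension $\dim F_j-1$. Expansion: let $X^{\mathbf{k}}=\{x_{ij}:1\le i\le n,1\le j\le k\}$; for $F\subseteq X$, $F^{\mathbf{k}}=\{x_{ij}: x_i\in F, 1\le j\le k\}$; if $\Delta=\langle F_1,\ldots,F_r\rangle$ then $\Delta^{\mathbf{k}}=\langle F_1^{\mathbf{k}},\ldots,F_r^{\mathbf{k}}\rangle$ on $X^{\mathbf{k}}$. $k$-shellability: let $\Gamma$ be a simplicial complex of dimension $d$ and $1\le k\le d+1$; $\Gamma$ is $k$-shellable if its facets can be ordered $F_1,\ldots,F_r$ such that for every $j=2,\ldots,r$, $\Gamma_j=\langle F_j\rangle\cap\langle F_1,\ldots,F_{j-1}\rangle$ satisfies (i) $\Gamma_j$ is generated by a nonempty set of faces of $\langle F_j\rangle$ of dimension $|F_j|-k-1$; (ii) if $\Gamma_j$ has more than one facet, then for every two distinct facets $\sigma,\tau$ of $\Gamma_j$, $F_j\subseteq\sigma\cup\tau$. *)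

theory Defs
  imports Main
begin

definition simplicial_complex :: "'a set \<Rightarrow> 'a set set \<Rightarrow> bool" where
  "simplicial_complex X \<Delta> \<longleftrightarrow> finite X \<and> \<Delta> \<subseteq> Pow X \<and> (\<forall>F\<in>\<Delta>. \<forall>G. G \<subseteq> F \<longrightarrow> G \<in> \<Delta>)"

definition facets :: "'a set set \<Rightarrow> 'a set set" where
  "facets \<Gamma> = {F \<in> \<Gamma>. \<forall>G\<in>\<Gamma>. F \<subseteq> G \<longrightarrow> G = F}"

definition gen :: "'a set set \<Rightarrow> 'a set set" where
  "gen S = {G. \<exists>F\<in>S. G \<subseteq> F}"

definition fdim :: "'a set \<Rightarrow> int" where
  "fdim F = int (card F) - 1"

definition pure_of_dim :: "'a set set \<Rightarrow> int \<Rightarrow> bool" where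
  "pure_of_dim \<Gamma> d \<longleftrightarrow> (\<forall>F\<in>facets \<Gamma>. fdim F = d)"

text \<open>Shellability: an ordering F_1,...,F_r (list L, 0-based) of the facets.\<close>
definition shellable :: "'a set set \<Rightarrow> bool" where
  "shellable \<Delta> \<longleftrightarrow> (\<exists>L. distinct L \<and> set L = facets \<Delta> \<and>
     (\<forall>j. 1 \<le> j \<and> j < length L \<longrightarrow>
        pure_of_dim (gen {L ! j} \<inter> gen (set (take j L))) (fdim (L ! j) - 1)))"

text \<open>k-shellability (conditions (i) and (ii) of the paper).\<close>
definition k_shellable :: "nat \<Rightarrow> 'a set set \<Rightarrow> bool" where
  "k_shellable k \<Gamma> \<longleftrightarrow> (\<exists>L. distinct L \<and> set L = facets \<Gamma> \<and>
     (\<forall>j. 1 \<le> j \<and> j < length L \<longrightarrow>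
        (let Fj = L ! j; \<Gamma>j = gen {Fj} \<inter> gen (set (take j L)) in
          (\<exists>S. S \<noteq> {} \<and> (\<forall>\<sigma>\<in>S. \<sigma> \<subseteq> Fj \<and> fdim \<sigma> = int (card Fj) - int k - 1) \<and> \<Gamma>j = gen S)
          \<and> (card (facets \<Gamma>j) > 1 \<longrightarrow>
               (\<forall>\<sigma>\<in>facets \<Gamma>j. \<forall>\<tau>\<in>facets \<Gamma>j. \<sigma> \<noteq> \<tau> \<longrightarrow> Fj \<subseteq> \<sigma> \<union> \<tau>)))))"

definition expand_face :: "nat \<Rightarrow> 'a set \<Rightarrow> ('a \<times> nat) set" where
  "expand_face k F = F \<times> {1..k}"

definition expansion :: "nat \<Rightarrow> 'a set set \<Rightarrow> ('a \<times> nat) set set" where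
  "expansion k \<Delta> = gen (expand_face k ` facets \<Delta>)"

end

theory Submission
  imports Defs
begin

text \<open>Expansion replaces every vertex by k copies, so it is an order embedding of faces
  that multiplies cardinalities by k. Hence, at each step of a facet ordering, the facets of
  the intersection of the expanded facet F^k with the earlier ones are exactly the expansions
  of the facets A of the intersection of F with the earlier ones. Codimension one of A in F
  becomes codimension k of A^k in F^k, which is condition (i); and two distinct faces of
  codimension one in F already cover F, which gives condition (ii). Conversely, condition (i)
  alone forces every A to have codimension one.\<close>

lemma facets_subset: "facets S \<subseteq> S"
  unfolding facets_def by blast

lemma facets_facets [simp]: "facets (facets S) = facets S"
  unfolding facets_def by blast

lemma facets_gen [simp]: "facets (gen S) = facets S"
  unfolding facets_def gen_def by blast

lemma facets_nonempty:
  assumes "finite S" "S \<noteq> {}"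
  shows "facets S \<noteq> {}"
  using finite_has_maximal[OF assms] unfolding facets_def by blast

lemma gen_facets:
  assumes "finite S"
  shows "gen (facets S) = gen S"
proof (intro equalityI subsetI)
  fix G assume "G \<in> gen S"
  then obtain C where "C \<in> S" "G \<subseteq> C" by (auto simp: gen_def)
  then obtain M where "M \<in> S" "C \<subseteq> M" "\<forall>B\<in>S. M \<subseteq> B \<longrightarrow> M = B"
    using finite_has_maximal2[OF assms] by metis
  with \<open>G \<subseteq> C\<close> show "G \<in> gen (facets S)"
    unfolding gen_def facets_def by blast
qed (auto simp: gen_def facets_def)

lemma gen_singleton_Int: "gen {F} \<inter> gen P = gen ((\<inter>) F ` P)"
  by (auto simp: gen_def)

lemma facets_image_order_embedding:
  assumes "\<And>A B. e A \<subseteq> e B \<longleftrightarrow> A \<subseteq> B"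
  shows "facets (e ` S) = e ` facets S"
proof -
  have "e A = e B \<longleftrightarrow> A = B" for A B using assms by (metis subset_antisym order_refl)
  then show ?thesis unfolding facets_def using assms by auto
qed

lemma Un_eq_if_card_plus_one_eq:
  assumes "finite F" "A \<subseteq> F" "B \<subseteq> F" "card A + 1 = card F" "card B + 1 = card F" "A \<noteq> B"
  shows "A \<union> B = F"
proof -
  have "finite B" using assms(1,3) by (rule finite_subset[rotated])
  have "\<not> A \<subseteq> B"
  proof
    assume "A \<subseteq> B"
    then have "A = B" using card_subset_eq[OF \<open>finite B\<close>] assms(4,5) by simp
    with assms(6) show False ..
  qed
  then obtain x where x: "x \<in> A" "x \<notin> B" by blast
  have "card (insert x B) = card F" using x \<open>finite B\<close> assms(5) by simp
  then have "insert x B = F" using card_subset_eq[OF assms(1)] x assms(2,3) by (metis insert_subset subsetD)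
  then show ?thesis using x assms(2,3) by blast
qed

lemma ex_distinct_list_image_iff:
  assumes "inj_on e A"
  shows "(\<exists>L'. distinct L' \<and> set L' = e ` A \<and> Q L') \<longleftrightarrow> (\<exists>L. distinct L \<and> set L = A \<and> Q (map e L))"
proof
  assume "\<exists>L'. distinct L' \<and> set L' = e ` A \<and> Q L'"
  then obtain L' where L': "distinct L'" "set L' = e ` A" "Q L'" by blast
  define L where "L = map (inv_into A e) L'"
  have "map e L = L'"
    unfolding L_def map_map
  proof (rule map_idI)
    fix y assume "y \<in> set L'"
    then show "(e \<circ> inv_into A e) y = y" using L'(2) by (simp add: f_inv_into_f)
  qed
  moreover have "set L = A"
    unfolding L_def set_map L'(2) using assms by (rule inv_into_image_cancel) simp
  ultimately show "\<exists>L. distinct L \<and> set L = A \<and> Q (map e L)"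
    using L' assms by (auto simp: distinct_map)
next
  assume "\<exists>L. distinct L \<and> set L = A \<and> Q (map e L)"
  then obtain L where "distinct L" "set L = A" "Q (map e L)" by blast
  then show "\<exists>L'. distinct L' \<and> set L' = e ` A \<and> Q L'"
    using assms by (intro exI[of _ "map e L"]) (simp add: distinct_map)
qed

lemma expand_face_subset_iff:
  assumes "k \<ge> 1"
  shows "expand_face k A \<subseteq> expand_face k B \<longleftrightarrow> A \<subseteq> B"
  using assms by (auto simp: expand_face_def subset_iff)

lemma inj_expand_face:
  assumes "k \<ge> 1"
  shows "inj (expand_face k)"
  by (rule injI) (metis assms expand_face_subset_iff subset_antisym order_refl)

lemma expand_face_Int: "expand_face k A \<inter> expand_face k B = expand_face k (A \<inter> B)"
  by (auto simp: expand_face_def)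

lemma expand_face_Un: "expand_face k A \<union> expand_face k B = expand_face k (A \<union> B)"
  by (auto simp: expand_face_def)

lemma card_expand_face: "card (expand_face k A) = card A * k"
  by (simp add: expand_face_def card_cartesian_product)

lemma facets_expand_face_image:
  assumes "k \<ge> 1"
  shows "facets (expand_face k ` S) = expand_face k ` facets S"
  by (rule facets_image_order_embedding) (rule expand_face_subset_iff[OF assms])

lemma facets_expansion:
  assumes "k \<ge> 1"
  shows "facets (expansion k \<Delta>) = expand_face k ` facets \<Delta>"
  by (simp add: expansion_def facets_expand_face_image[OF assms])

lemma gen_singleton_Int_expand_face:
  "gen {expand_face k F} \<inter> gen (expand_face k ` P) = gen (expand_face k ` (\<inter>) F ` P)"
  by (simp add: gen_singleton_Int image_image expand_face_Int)

definition k_shelling_step :: "nat \<Rightarrow> 'a set \<Rightarrow> 'a set set \<Rightarrow> bool" where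
  "k_shelling_step k F P \<longleftrightarrow> (let \<Gamma> = gen {F} \<inter> gen P in
     (\<exists>S. S \<noteq> {} \<and> (\<forall>\<sigma>\<in>S. \<sigma> \<subseteq> F \<and> fdim \<sigma> = int (card F) - int k - 1) \<and> \<Gamma> = gen S)
     \<and> (card (facets \<Gamma>) > 1 \<longrightarrow> (\<forall>\<sigma>\<in>facets \<Gamma>. \<forall>\<tau>\<in>facets \<Gamma>. \<sigma> \<noteq> \<tau> \<longrightarrow> F \<subseteq> \<sigma> \<union> \<tau>)))"

lemma k_shellable_iff:
  "k_shellable k \<Gamma> \<longleftrightarrow> (\<exists>L. distinct L \<and> set L = facets \<Gamma> \<and>
     (\<forall>j. 1 \<le> j \<and> j < length L \<longrightarrow> k_shelling_step k (L ! j) (set (take j L))))"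
  unfolding k_shellable_def k_shelling_step_def Let_def ..

lemma pure_codim_one_iff:
  "pure_of_dim (gen {F} \<inter> gen P) (fdim F - 1) \<longleftrightarrow> (\<forall>A\<in>facets ((\<inter>) F ` P). card A + 1 = card F)"
  unfolding gen_singleton_Int pure_of_dim_def facets_gen fdim_def
  by (intro ball_cong refl) linarith

lemma k_shelling_step_expand_face:
  assumes k: "k \<ge> 1" and "finite F" "finite P" "P \<noteq> {}"
    and codim_one: "\<forall>A\<in>facets ((\<inter>) F ` P). card A + 1 = card F"
  shows "k_shelling_step k (expand_face k F) (expand_face k ` P)"
proof -
  let ?e = "expand_face k"
  define I where "I = (\<inter>) F ` P"
  have "finite I" "I \<noteq> {}" using assms(3,4) by (simp_all add: I_def)
  have face_sub: "A \<subseteq> F" if "A \<in> facets I" for A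
    using that facets_subset unfolding I_def by blast
  have "gen {?e F} \<inter> gen (?e ` P) = gen (?e ` I)"
    unfolding I_def by (rule gen_singleton_Int_expand_face)
  also have "\<dots> = gen (?e ` facets I)"
    using gen_facets[of "?e ` I"] \<open>finite I\<close> by (simp add: facets_expand_face_image[OF k])
  finally have \<Gamma>: "gen {?e F} \<inter> gen (?e ` P) = gen (?e ` facets I)" .
  have facets_\<Gamma>: "facets (gen (?e ` facets I)) = ?e ` facets I"
    by (simp add: facets_expand_face_image[OF k])
  show ?thesis
    unfolding k_shelling_step_def Let_def \<Gamma> facets_\<Gamma>
  proof (intro conjI impI exI[of _ "?e ` facets I"] ballI refl)
    show "?e ` facets I \<noteq> {}" using facets_nonempty[OF \<open>finite I\<close> \<open>I \<noteq> {}\<close>] by simp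
  next
    fix \<sigma> assume "\<sigma> \<in> ?e ` facets I"
    then obtain A where A: "A \<in> facets I" "\<sigma> = ?e A" by blast
    show "\<sigma> \<subseteq> ?e F" using A face_sub expand_face_subset_iff[OF k] by blast
    have "card F = card A + 1" using codim_one A(1) unfolding I_def by simp
    then show "fdim \<sigma> = int (card (?e F)) - int k - 1"
      unfolding A(2) fdim_def card_expand_face by (simp add: algebra_simps)
  next
    fix \<sigma> \<tau> assume "\<sigma> \<in> ?e ` facets I" "\<tau> \<in> ?e ` facets I" "\<sigma> \<noteq> \<tau>"
    then obtain A B where A: "A \<in> facets I" "\<sigma> = ?e A" and B: "B \<in> facets I" "\<tau> = ?e B"
      and "A \<noteq> B" by blast
    have "A \<union> B = F"
      using Un_eq_if_card_plus_one_eq[OF \<open>finite F\<close> face_sub[OF A(1)] face_sub[OF B(1)]]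
        codim_one A(1) B(1) \<open>A \<noteq> B\<close> unfolding I_def by blast
    then show "?e F \<subseteq> \<sigma> \<union> \<tau>" unfolding A(2) B(2) expand_face_Un by simp
  qed
qed

lemma codim_one_if_k_shelling_step_expand_face:
  assumes k: "k \<ge> 1" and step: "k_shelling_step k (expand_face k F) (expand_face k ` P)"
  shows "\<forall>A\<in>facets ((\<inter>) F ` P). card A + 1 = card F"
proof
  let ?e = "expand_face k"
  fix A assume A: "A \<in> facets ((\<inter>) F ` P)"
  obtain S where S: "\<forall>\<sigma>\<in>S. \<sigma> \<subseteq> ?e F \<and> fdim \<sigma> = int (card (?e F)) - int k - 1"
    and gen_S: "gen (?e ` (\<inter>) F ` P) = gen S"
    using step unfolding k_shelling_step_def Let_def gen_singleton_Int_expand_face by blast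
  have "facets S = ?e ` facets ((\<inter>) F ` P)"
    using arg_cong[OF gen_S, of facets] by (simp add: facets_expand_face_image[OF k])
  then have "?e A \<in> S" using A facets_subset by blast
  then have "fdim (?e A) = int (card (?e F)) - int k - 1" using S by blast
  then have "int (card A * k) - 1 = int (card F * k) - int k - 1"
    unfolding fdim_def card_expand_face .
  then have "int ((card A + 1) * k) = int (card F * k)" by (simp add: algebra_simps)
  then have "(card A + 1) * k = card F * k" by (simp only: of_nat_eq_iff)
  then show "card A + 1 = card F" using k by (simp only: mult_right_cancel)
qed

lemma pure_codim_one_iff_k_shelling_step_expand_face:
  assumes "k \<ge> 1" "finite F" "finite P" "P \<noteq> {}"
  shows "pure_of_dim (gen {F} \<inter> gen P) (fdim F - 1) \<longleftrightarrow>
    k_shelling_step k (expand_face k F) (expand_face k ` P)"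
  unfolding pure_codim_one_iff
  using k_shelling_step_expand_face[OF assms] codim_one_if_k_shelling_step_expand_face[OF assms(1)]
  by (rule iffI)

lemma pure_codim_one_iff_k_shelling_step_map_expand_face:
  assumes k: "k \<ge> 1" and fin: "\<forall>F\<in>set L. finite F" and j: "1 \<le> j" "j < length L"
  shows "pure_of_dim (gen {L ! j} \<inter> gen (set (take j L))) (fdim (L ! j) - 1) \<longleftrightarrow>
    k_shelling_step k (map (expand_face k) L ! j) (set (take j (map (expand_face k) L)))"
proof -
  have "set (take j L) \<noteq> {}" using j by (cases L) auto
  moreover have "finite (L ! j)" using fin j by simp
  ultimately have "pure_of_dim (gen {L ! j} \<inter> gen (set (take j L))) (fdim (L ! j) - 1) \<longleftrightarrow>
      k_shelling_step k (expand_face k (L ! j)) (expand_face k ` set (take j L))"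
    by (intro pure_codim_one_iff_k_shelling_step_expand_face[OF k]) simp_all
  then show ?thesis using j by (simp add: take_map)
qed

theorem theorem2p8:
  fixes X :: "'a set" and \<Delta> :: "'a set set" and k :: nat
  assumes "simplicial_complex X \<Delta>" and "k \<ge> 1"
  shows "shellable \<Delta> \<longleftrightarrow> k_shellable k (expansion k \<Delta>)"
proof -
  let ?e = "expand_face k"
  have finite_facets: "\<forall>F\<in>facets \<Delta>. finite F"
    using assms(1) facets_subset unfolding simplicial_complex_def by (meson PowD finite_subset subsetD)
  have "k_shellable k (expansion k \<Delta>) \<longleftrightarrow> (\<exists>L. distinct L \<and> set L = facets \<Delta> \<and>
      (\<forall>j. 1 \<le> j \<and> j < length (map ?e L) \<longrightarrow>
         k_shelling_step k (map ?e L ! j) (set (take j (map ?e L)))))"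
    unfolding k_shellable_iff facets_expansion[OF assms(2)]
    by (rule ex_distinct_list_image_iff) (rule inj_on_subset[OF inj_expand_face[OF assms(2)]], simp)
  also have "\<dots> \<longleftrightarrow> shellable \<Delta>"
    unfolding shellable_def length_map
  proof (intro ex_cong1 conj_cong refl all_cong1 imp_cong)
    fix L j assume L: "set L = facets \<Delta>" and j: "1 \<le> j \<and> j < length L"
    have "\<forall>F\<in>set L. finite F" using L finite_facets by simp
    with j show "k_shelling_step k (map ?e L ! j) (set (take j (map ?e L))) \<longleftrightarrow>
        pure_of_dim (gen {L ! j} \<inter> gen (set (take j L))) (fdim (L ! j) - 1)"
      using pure_codim_one_iff_k_shelling_step_map_expand_face[OF assms(2)] by blast
  qed
  finally show ?thesis ..
qed

end
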